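(* Let $L_x,L_y>0$, $L_{xy}\geq 0$, and let $F\in\mathcal{F}(L_x, L_y, L_{xy}, 0, 0)$ (i.e. $F$ is smooth convex-concave, see context) with nonempty saddle point set $S^\star$. Let $L=\max\{L_x, L_y\}$. Assume $F$ has a quadratic gradient growth with constant $\mu_F>0$. If $t\in\left(0, \tfrac{2 \mu_F}{L \mu_F+2L_{xy} \sqrt{\mu_F (L-\mu_F)}+L_{xy}^2}\right)$, then for every $(x^1,y^1)\in\mathbb{R}^n\times\mathbb{R}^m$, the point $x^{2}=x^1-t\nabla_x F(x^1, y^1)$, $y^{2}=y^1+t\nabla_y F(x^1, y^1)$ satisfies $$ d_{S^\star}^2((x^2, y^2))\leq \alpha\, d_{S^\star}^2((x^1, y^1)), $$ where $$ \alpha=t \left(2 tL_{xy} \sqrt{\mu_F (L-\mu_F)}+\mu_F (L t-2)+tL_{xy}^2\right)+1. $$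
   Context: $\mathcal{F}(L_x, L_y, L_{xy}, 0, 0)$ denotes the set of differentiable $F:\mathbb{R}^n\times\mathbb{R}^m\to\mathbb{R}$ with $F(\cdot,y)$ convex for all $y$, $F(x,\cdot)$ concave for all $x$, and for all $x,x_1,x_2,y,y_1,y_2$: $\|\nabla_x F(x_2, y)-\nabla_x F(x_1, y)\|\leq L_x\|x_2-x_1\|$; $\|\nabla_y F(x, y_2)-\nabla_y F(x, y_1)\|\leq L_y\|y_2-y_1\|$; $\|\nabla_x F(x, y_2)-\nabla_x F(x, y_1)\|\leq L_{xy}\|y_2-y_1\|$; $\|\nabla_y F(x_2, y)-\nabla_y F(x_1, y)\|\leq L_{xy}\|x_2-x_1\|$. $S^\star$ is the set of saddle points $(x^\star,y^\star)$, i.e. $F(x^\star, y)\leq F(x^\star, y^\star)\leq F(x, y^\star)$ for all $x,y$; it is closed and convex. $d_{S^\star}(z)=\inf_{w\in S^\star}\|z-w\|$. $F$ has quadratic gradient growth with $\mu_F>0$ if for all $(x,y)$: $\langle \nabla_x F(x,y), x-x^\star\rangle-\langle \nabla_y F(x,y), y-y^\star\rangle \geq \mu_F\, d_{S^\star}^2((x,y))$, where $(x^\star,y^\star)$ is the Euclidean projection of $(x,y)$ onto $S^\star$. *)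

theory Defs
  imports "HOL-Analysis.Analysis"
begin

text \<open>F :: 'a => 'b => real with 'a, 'b Euclidean spaces (playing R^n, R^m).
  Gx x y and Gy x y are the partial gradients nabla_x F(x,y), nabla_y F(x,y).\<close>

definition partial_gradients ::
  "('a::euclidean_space \<Rightarrow> 'b::euclidean_space \<Rightarrow> real) \<Rightarrow> ('a \<Rightarrow> 'b \<Rightarrow> 'a) \<Rightarrow> ('a \<Rightarrow> 'b \<Rightarrow> 'b) \<Rightarrow> bool" where
  "partial_gradients F Gx Gy \<longleftrightarrow>
     (\<forall>x y. ((\<lambda>u. F u y) has_derivative (\<lambda>h. Gx x y \<bullet> h)) (at x)) \<and>
     (\<forall>x y. ((\<lambda>v. F x v) has_derivative (\<lambda>h. Gy x y \<bullet> h)) (at y))"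

definition smooth_convex_concave ::
  "real \<Rightarrow> real \<Rightarrow> real \<Rightarrow> ('a::euclidean_space \<Rightarrow> 'b::euclidean_space \<Rightarrow> real)
   \<Rightarrow> ('a \<Rightarrow> 'b \<Rightarrow> 'a) \<Rightarrow> ('a \<Rightarrow> 'b \<Rightarrow> 'b) \<Rightarrow> bool" where
  "smooth_convex_concave Lx Ly Lxy F Gx Gy \<longleftrightarrow>
     (\<forall>p. (\<lambda>(x, y). F x y) differentiable (at p)) \<and>
     partial_gradients F Gx Gy \<and>
     (\<forall>y. convex_on UNIV (\<lambda>x. F x y)) \<and>
     (\<forall>x. concave_on UNIV (\<lambda>y. F x y)) \<and>
     (\<forall>x1 x2 y. norm (Gx x2 y - Gx x1 y) \<le> Lx * norm (x2 - x1)) \<and>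
     (\<forall>x y1 y2. norm (Gy x y2 - Gy x y1) \<le> Ly * norm (y2 - y1)) \<and>
     (\<forall>x y1 y2. norm (Gx x y2 - Gx x y1) \<le> Lxy * norm (y2 - y1)) \<and>
     (\<forall>x1 x2 y. norm (Gy x2 y - Gy x1 y) \<le> Lxy * norm (x2 - x1))"

definition saddle_points :: "('a \<Rightarrow> 'b \<Rightarrow> real) \<Rightarrow> ('a \<times> 'b) set" where
  "saddle_points F = {(xs, ys). \<forall>x y. F xs y \<le> F xs ys \<and> F xs ys \<le> F x ys}"

definition quadratic_gradient_growth ::
  "('a::euclidean_space \<Rightarrow> 'b::euclidean_space \<Rightarrow> real) \<Rightarrow> ('a \<Rightarrow> 'b \<Rightarrow> 'a) \<Rightarrow> ('a \<Rightarrow> 'b \<Rightarrow> 'b) \<Rightarrow> real \<Rightarrow> bool" where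
  "quadratic_gradient_growth F Gx Gy \<mu> \<longleftrightarrow> \<mu> > 0 \<and>
     (\<forall>x y. let p = closest_point (saddle_points F) (x, y) in
        Gx x y \<bullet> (x - fst p) - Gy x y \<bullet> (y - snd p)
          \<ge> \<mu> * (infdist (x, y) (saddle_points F))\<^sup>2)"

end

theory Submission
  imports Defs
begin

text \<open>Let \<open>z\<^sup>* = (x\<^sup>*, y\<^sup>*)\<close> be the projection of \<open>z = (x, y)\<close> onto the saddle set, \<open>d = z - z\<^sup>*\<close>
  and \<open>g = (\<nabla>\<^sub>xF(z), -\<nabla>\<^sub>yF(z))\<close>, so that the squared distance after the step is at most
  \<open>|d - t g|\<^sup>2 = |d|\<^sup>2 - 2 t \<langle>g, d\<rangle> + t\<^sup>2 |g|\<^sup>2\<close>. Both partial gradients vanish at \<open>z\<^sup>*\<close>.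
  Adding up the interpolation inequalities of L-smooth convex functions along the four edges
  of the rectangle spanned by \<open>z\<close> and \<open>z\<^sup>*\<close> (the function values cancel) splits \<open>g = w + s\<close>:
  \<open>w\<close> collects gradient differences within each block and satisfies
  \<open>|\<langle>s, d\<rangle>| \<le> \<langle>w, d\<rangle> - q\<close> with \<open>|w|\<^sup>2 \<le> L q\<close>, while \<open>s\<close> collects the cross differences,
  so \<open>|s| \<le> L\<^sub>x\<^sub>y |d|\<close>. Together with the growth condition \<open>\<langle>g, d\<rangle> \<ge> \<mu> |d|\<^sup>2\<close> this
  reduces the claim to an inequality between the Gram entries of \<open>w\<close>, \<open>s\<close> and \<open>d\<close>.\<close>

lemma has_real_derivative_along_line:
  fixes f :: "'v::real_inner \<Rightarrow> real"
  assumes "\<And>u. (f has_derivative (\<lambda>h. g u \<bullet> h)) (at u)"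
  shows "((\<lambda>r. f (x + r *\<^sub>R h)) has_real_derivative (g (x + r *\<^sub>R h) \<bullet> h)) (at r)"
proof -
  have "((\<lambda>r. x + r *\<^sub>R h) has_derivative (\<lambda>r. r *\<^sub>R h)) (at r)"
    by (intro derivative_eq_intros) auto
  then have "((\<lambda>r. f (x + r *\<^sub>R h)) has_derivative (\<lambda>k. g (x + r *\<^sub>R h) \<bullet> (k *\<^sub>R h))) (at r)"
    by (rule has_derivative_compose, simp add: assms)
  moreover have "(\<lambda>k. g (x + r *\<^sub>R h) \<bullet> (k *\<^sub>R h)) = (*) (g (x + r *\<^sub>R h) \<bullet> h)"
    by (rule ext) (simp add: mult.commute)
  ultimately show ?thesis
    unfolding has_field_derivative_def by simp
qed

lemma Lipschitz_gradient_imp_below_quadratic: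
  fixes f :: "'v::real_inner \<Rightarrow> real"
  assumes deriv: "\<And>u. (f has_derivative (\<lambda>h. g u \<bullet> h)) (at u)"
    and Lipschitz: "\<And>u v. norm (g u - g v) \<le> L * norm (u - v)"
  shows "f y \<le> f x + g x \<bullet> (y - x) + L / 2 * (norm (y - x))\<^sup>2"
proof -
  define h where "h = y - x"
  define \<phi> where "\<phi> r = f (x + r *\<^sub>R h) - r * (g x \<bullet> h) - L / 2 * r\<^sup>2 * (norm h)\<^sup>2" for r
  have \<phi>_deriv: "(\<phi> has_real_derivative (g (x + r *\<^sub>R h) \<bullet> h - g x \<bullet> h - L * r * (norm h)\<^sup>2)) (at r)"
    for r
    unfolding \<phi>_def
    by (rule derivative_eq_intros has_real_derivative_along_line[OF deriv] refl | simp)+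
  have "\<phi> 1 \<le> \<phi> 0"
  proof (rule DERIV_nonpos_imp_nonincreasing[of 0 1])
    fix r :: real assume r: "0 \<le> r" "r \<le> 1"
    have "g (x + r *\<^sub>R h) \<bullet> h - g x \<bullet> h = (g (x + r *\<^sub>R h) - g x) \<bullet> h"
      by (simp add: inner_diff_left)
    also have "\<dots> \<le> norm (g (x + r *\<^sub>R h) - g x) * norm h"
      by (rule norm_cauchy_schwarz)
    also have "\<dots> \<le> L * norm (r *\<^sub>R h) * norm h"
      using Lipschitz[of "x + r *\<^sub>R h" x] by (intro mult_right_mono) auto
    also have "\<dots> = L * r * (norm h)\<^sup>2"
      using r by (simp add: power2_eq_square)
    finally show "\<exists>y. DERIV \<phi> r :> y \<and> y \<le> 0"
      using \<phi>_deriv by (intro exI[of _ "g (x + r *\<^sub>R h) \<bullet> h - g x \<bullet> h - L * r * (norm h)\<^sup>2"]) auto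
  qed simp
  then show ?thesis
    unfolding \<phi>_def h_def by simp
qed

lemma convex_on_imp_above_tangent_plane:
  fixes f :: "'v::real_inner \<Rightarrow> real"
  assumes deriv: "\<And>u. (f has_derivative (\<lambda>h. g u \<bullet> h)) (at u)"
    and convex: "convex_on UNIV f"
  shows "f x + g x \<bullet> (y - x) \<le> f y"
proof -
  define h where "h = y - x"
  have "convex_on UNIV (\<lambda>r. f (x + r *\<^sub>R h))"
  proof (rule convex_onI)
    fix u a b :: real
    assume "0 < u" "u < 1"
    moreover have "x + ((1 - u) *\<^sub>R a + u *\<^sub>R b) *\<^sub>R h
        = (1 - u) *\<^sub>R (x + a *\<^sub>R h) + u *\<^sub>R (x + b *\<^sub>R h)"
      by (simp add: algebra_simps)
    ultimately show "f (x + ((1 - u) *\<^sub>R a + u *\<^sub>R b) *\<^sub>R h)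
        \<le> (1 - u) * f (x + a *\<^sub>R h) + u * f (x + b *\<^sub>R h)"
      using convex_onD[OF convex, of u] by simp
  qed simp
  then have "(g (x + 0 *\<^sub>R h) \<bullet> h) * (1 - 0) \<le> f (x + 1 *\<^sub>R h) - f (x + 0 *\<^sub>R h)"
    using has_real_derivative_along_line[OF deriv, of x h 0]
    by (intro convex_on_imp_above_tangent) (auto intro: has_field_derivative_at_within)
  then show ?thesis
    unfolding h_def by simp
qed

text \<open>The function \<open>f - g x \<bullet> _\<close> is minimal at \<open>x\<close>, and by the quadratic upper bound a
  gradient step of length \<open>1 / L\<close> from \<open>y\<close> lowers it by \<open>|g y - g x|\<^sup>2 / (2 L)\<close>.\<close>

lemma convex_Lipschitz_gradient_imp_above_quadratic:
  fixes f :: "'v::real_inner \<Rightarrow> real"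
  assumes deriv: "\<And>u. (f has_derivative (\<lambda>h. g u \<bullet> h)) (at u)"
    and convex: "convex_on UNIV f"
    and Lipschitz: "\<And>u v. norm (g u - g v) \<le> L * norm (u - v)"
    and "L > 0"
  shows "f x + g x \<bullet> (y - x) + (norm (g y - g x))\<^sup>2 / (2 * L) \<le> f y"
proof -
  define \<phi> where "\<phi> u = f u - g x \<bullet> u" for u
  define g' where "g' u = g u - g x" for u
  have \<phi>_deriv: "(\<phi> has_derivative (\<lambda>h. g' u \<bullet> h)) (at u)" for u
    unfolding \<phi>_def g'_def
    by (rule derivative_eq_intros deriv | simp add: inner_diff_left)+
  have \<phi>_min: "\<phi> x \<le> \<phi> u" for u
    using convex_on_imp_above_tangent_plane[OF deriv convex, of x u]
    unfolding \<phi>_def by (simp add: inner_diff_right)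
  define y' where "y' = y - (1 / L) *\<^sub>R g' y"
  have "\<phi> y' \<le> \<phi> y + g' y \<bullet> (y' - y) + L / 2 * (norm (y' - y))\<^sup>2"
    by (rule Lipschitz_gradient_imp_below_quadratic[OF \<phi>_deriv])
      (use Lipschitz in \<open>simp add: g'_def\<close>)
  also have "\<dots> = \<phi> y - (norm (g' y))\<^sup>2 / (2 * L)"
    using \<open>L > 0\<close> by (simp add: y'_def dot_square_norm power2_eq_square field_simps)
  finally show ?thesis
    using \<phi>_min[of y'] unfolding \<phi>_def g'_def by (simp add: inner_diff_right)
qed

lemma twice_le_weighted_sum_of_product_bound:
  fixes A B Y e :: real
  assumes "A \<ge> 0" "B \<ge> 0" "Y\<^sup>2 \<le> A * B" "e > 0"
  shows "2 * Y \<le> e * A + B / e"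
proof (rule power2_le_imp_le)
  have "(e * A + B / e)\<^sup>2 - 4 * (A * B) = (e * A - B / e)\<^sup>2"
    using \<open>e > 0\<close> by (simp add: power2_eq_square field_simps)
  moreover have "(2 * Y)\<^sup>2 = 4 * Y\<^sup>2" "0 \<le> (e * A - B / e)\<^sup>2"
    by simp_all
  ultimately show "(2 * Y)\<^sup>2 \<le> (e * A + B / e)\<^sup>2"
    using \<open>Y\<^sup>2 \<le> A * B\<close> by linarith
  show "0 \<le> e * A + B / e"
    using assms by simp
qed

lemma Cauchy_Schwarz_ineq_orthogonal_to:
  fixes u v d :: "'v::real_inner"
  assumes "d \<bullet> d > 0"
  shows "((d \<bullet> d) * (u \<bullet> v) - (u \<bullet> d) * (v \<bullet> d))\<^sup>2
      \<le> ((d \<bullet> d) * (u \<bullet> u) - (u \<bullet> d)\<^sup>2) * ((d \<bullet> d) * (v \<bullet> v) - (v \<bullet> d)\<^sup>2)"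
proof -
  define D where "D = d \<bullet> d"
  define u' where "u' = D *\<^sub>R u - (u \<bullet> d) *\<^sub>R d"
  define v' where "v' = D *\<^sub>R v - (v \<bullet> d) *\<^sub>R d"
  have uv: "u' \<bullet> v' = D * (D * (u \<bullet> v) - (u \<bullet> d) * (v \<bullet> d))"
    unfolding u'_def v'_def D_def
    by (simp add: inner_diff_left inner_diff_right inner_commute algebra_simps)
  have uu: "u' \<bullet> u' = D * (D * (u \<bullet> u) - (u \<bullet> d)\<^sup>2)"
    unfolding u'_def D_def
    by (simp add: inner_diff_left inner_diff_right inner_commute power2_eq_square algebra_simps)
  have vv: "v' \<bullet> v' = D * (D * (v \<bullet> v) - (v \<bullet> d)\<^sup>2)"
    unfolding v'_def D_def
    by (simp add: inner_diff_left inner_diff_right inner_commute power2_eq_square algebra_simps)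
  have "D\<^sup>2 * (D * (u \<bullet> v) - (u \<bullet> d) * (v \<bullet> d))\<^sup>2 = (u' \<bullet> v')\<^sup>2"
    unfolding uv by (simp add: power_mult_distrib)
  also have "\<dots> \<le> (u' \<bullet> u') * (v' \<bullet> v')"
    by (rule Cauchy_Schwarz_ineq)
  also have "\<dots> = D\<^sup>2 * ((D * (u \<bullet> u) - (u \<bullet> d)\<^sup>2) * (D * (v \<bullet> v) - (v \<bullet> d)\<^sup>2))"
    unfolding uu vv by (simp add: power2_eq_square algebra_simps)
  finally have "D\<^sup>2 * (D * (u \<bullet> v) - (u \<bullet> d) * (v \<bullet> d))\<^sup>2
      \<le> D\<^sup>2 * ((D * (u \<bullet> u) - (u \<bullet> d)\<^sup>2) * (D * (v \<bullet> v) - (v \<bullet> d)\<^sup>2))" .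
  moreover have "D\<^sup>2 > 0"
    using assms unfolding D_def by simp
  ultimately show ?thesis
    unfolding D_def by (metis mult_le_cancel_left_pos)
qed

lemma square_defect_le_interpolation_bound:
  fixes D P \<sigma> W q L :: real
  assumes "D > 0" "L > 0" "W \<le> L * q" "\<bar>\<sigma>\<bar> \<le> P - q" "P\<^sup>2 \<le> D * W"
  shows "D * W - P\<^sup>2 \<le> (P + \<sigma>) * (L * D - (P + \<sigma>))"
proof -
  define M where "M = D * L"
  have "M > 0"
    using assms unfolding M_def by simp
  have DW: "D * W \<le> M * (P - \<bar>\<sigma>\<bar>)"
  proof -
    have "D * W \<le> D * (L * q)"
      using assms by simp
    also have "\<dots> \<le> D * (L * (P - \<bar>\<sigma>\<bar>))"
      using assms by (intro mult_left_mono) auto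
    finally show ?thesis
      unfolding M_def by (simp add: algebra_simps)
  qed
  then have key: "P * P + M * \<bar>\<sigma>\<bar> \<le> M * P"
    using assms by (simp add: power2_eq_square algebra_simps)
  moreover have "0 \<le> M * \<bar>\<sigma>\<bar>" "0 \<le> P * P"
    using \<open>M > 0\<close> by simp_all
  ultimately have "0 \<le> M * P" "P * P \<le> M * P"
    by linarith+
  then have "0 \<le> P" "P \<le> M"
    using \<open>M > 0\<close> mult_right_le_imp_le[of P P M] by (auto simp: zero_le_mult_iff less_le)
  have "0 \<le> M * \<sigma> + M * \<bar>\<sigma>\<bar> - 2 * P * \<sigma> - \<sigma>\<^sup>2"
  proof (cases "\<sigma> \<ge> 0")
    case True
    have "M * \<sigma> \<le> P * (M - P)"
      using key True by (simp add: algebra_simps)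
    also have "\<dots> \<le> M * (M - P)"
      using \<open>P \<le> M\<close> by (intro mult_right_mono) auto
    finally have "\<sigma> \<le> M - P"
      using \<open>M > 0\<close> by simp
    then have "0 \<le> \<sigma> * (2 * M - 2 * P - \<sigma>)"
      using True \<open>P \<le> M\<close> by (intro mult_nonneg_nonneg) auto
    then show ?thesis
      using True by (simp add: power2_eq_square algebra_simps)
  next
    case False
    have "M * (- \<sigma>) \<le> P * (M - P)"
      using key False by (simp add: algebra_simps)
    also have "\<dots> \<le> P * M"
      using \<open>0 \<le> P\<close> by (intro mult_left_mono) auto
    finally have "M * (- \<sigma>) \<le> M * P"
      by (simp add: mult.commute)
    then have "- \<sigma> \<le> P"
      using \<open>M > 0\<close> by (rule mult_left_le_imp_le)
    then have "0 \<le> (- \<sigma>) * (2 * P + \<sigma>)"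
      using False by (intro mult_nonneg_nonneg) auto
    then show ?thesis
      using False by (simp add: power2_eq_square algebra_simps)
  qed
  then show ?thesis
    using DW unfolding M_def by (simp add: power2_eq_square algebra_simps)
qed

lemma cross_term_le_tangent_bound:
  fixes A B Y M D Lxy c :: real
  assumes "c > 0" "Lxy \<ge> 0" "0 \<le> A" "A \<le> M" "0 \<le> B" "B \<le> Lxy\<^sup>2 * D\<^sup>2" "Y\<^sup>2 \<le> A * B"
  shows "A + 2 * Y + B \<le> (1 + Lxy / c) * M + (c * Lxy + Lxy\<^sup>2) * D\<^sup>2"
proof -
  have "2 * Y \<le> Lxy / c * A + c * Lxy * D\<^sup>2"
  proof (cases "Lxy = 0")
    case True
    then have "Y\<^sup>2 \<le> 0"
      using assms by (metis mult_zero_right zero_power2 mult_zero_left order.trans mult_left_mono)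
    then show ?thesis
      using True by simp
  next
    case False
    then have "Lxy > 0"
      using assms by simp
    have "2 * Y \<le> Lxy / c * A + B / (Lxy / c)"
      using assms \<open>Lxy > 0\<close> by (intro twice_le_weighted_sum_of_product_bound) auto
    also have "B / (Lxy / c) \<le> (Lxy\<^sup>2 * D\<^sup>2) / (Lxy / c)"
      using assms \<open>Lxy > 0\<close> by (intro divide_right_mono) auto
    also have "(Lxy\<^sup>2 * D\<^sup>2) / (Lxy / c) = c * Lxy * D\<^sup>2"
      using \<open>Lxy > 0\<close> by (simp add: power2_eq_square field_simps)
    finally show ?thesis
      by simp
  qed
  moreover have "Lxy / c * A \<le> Lxy / c * M"
    using assms by (intro mult_left_mono) auto
  ultimately show ?thesis
    using assms by (simp add: algebra_simps)
qed

lemma step_size_slope_bound: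
  fixes L Lxy \<mu> t :: real
  defines "c \<equiv> sqrt (\<mu> * (L - \<mu>))"
  assumes "0 < \<mu>" "\<mu> < L" "Lxy \<ge> 0" "t > 0"
    and step: "t * (L * \<mu> + 2 * Lxy * c + Lxy\<^sup>2) < 2 * \<mu>"
  shows "t * (L + Lxy / c * (L - 2 * \<mu>)) \<le> 2"
proof -
  have "c > 0" and c_sq: "c\<^sup>2 = \<mu> * (L - \<mu>)"
    using assms by simp_all
  have coupling: "Lxy * (\<mu> * (L - 2 * \<mu>)) \<le> Lxy * (2 * c\<^sup>2 + Lxy * c)"
    using assms \<open>c > 0\<close> c_sq by (intro mult_left_mono) (auto simp: algebra_simps)
  have "t * (L + Lxy / c * (L - 2 * \<mu>)) * (\<mu> * c) = t * (L * \<mu> * c + Lxy * (\<mu> * (L - 2 * \<mu>)))"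
    using \<open>c > 0\<close> by (simp add: field_simps)
  also have "\<dots> \<le> t * (L * \<mu> * c + Lxy * (2 * c\<^sup>2 + Lxy * c))"
    using \<open>t > 0\<close> coupling by (intro mult_left_mono) auto
  also have "\<dots> = t * (L * \<mu> + 2 * Lxy * c + Lxy\<^sup>2) * c"
    by (simp add: power2_eq_square algebra_simps)
  also have "\<dots> \<le> 2 * (\<mu> * c)"
    using step \<open>c > 0\<close> by simp
  finally show ?thesis
    by (rule mult_right_le_imp_le) (use \<open>c > 0\<close> \<open>0 < \<mu>\<close> in simp)
qed

text \<open>The left-hand side is a concave quadratic in \<open>\<Phi>\<close>; the step size condition makes its
  slope at \<open>\<Phi> = \<mu> D\<close> non-positive, so it is largest there.\<close>

lemma gda_majorant_le_at_growth_rate: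
  fixes D \<Phi> L Lxy \<mu> t c :: real
  assumes "D > 0" "Lxy \<ge> 0" "t > 0" "c > 0" "c\<^sup>2 = \<mu> * (L - \<mu>)"
    and slope: "t * (L + Lxy / c * (L - 2 * \<mu>)) \<le> 2"
    and growth: "\<mu> * D \<le> \<Phi>"
  shows "D\<^sup>2 - 2 * t * \<Phi> * D
      + t\<^sup>2 * (\<Phi>\<^sup>2 + (1 + Lxy / c) * (\<Phi> * (L * D - \<Phi>)) + (c * Lxy + Lxy\<^sup>2) * D\<^sup>2)
    \<le> D\<^sup>2 - 2 * t * \<mu> * D\<^sup>2 + t\<^sup>2 * (L * \<mu> + 2 * Lxy * c + Lxy\<^sup>2) * D\<^sup>2"
proof -
  have "t * (Lxy / c) * (L * D - \<Phi> - \<mu> * D) \<le> t * (Lxy / c) * ((L - 2 * \<mu>) * D)"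
    using assms by (intro mult_left_mono) (auto simp: algebra_simps)
  moreover have "(t * (L + Lxy / c * (L - 2 * \<mu>)) - 2) * D \<le> 0"
    using slope \<open>D > 0\<close> by (simp add: mult_le_0_iff)
  ultimately have "t * L * D + t * (Lxy / c) * (L * D - \<Phi> - \<mu> * D) - 2 * D \<le> 0"
    by (simp add: algebra_simps)
  moreover have "0 \<le> t * (\<Phi> - \<mu> * D)"
    using growth \<open>t > 0\<close> by simp
  ultimately have "t * (\<Phi> - \<mu> * D) * (t * L * D + t * (Lxy / c) * (L * D - \<Phi> - \<mu> * D) - 2 * D) \<le> 0"
    by (simp add: mult_le_0_iff)
  moreover have "D\<^sup>2 - 2 * t * \<Phi> * D
      + t\<^sup>2 * (\<Phi>\<^sup>2 + (1 + Lxy / c) * (\<Phi> * (L * D - \<Phi>)) + (c * Lxy + Lxy\<^sup>2) * D\<^sup>2)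
    = D\<^sup>2 - 2 * t * \<mu> * D\<^sup>2 + t\<^sup>2 * (L * \<mu> + 2 * Lxy * c + Lxy\<^sup>2) * D\<^sup>2
      + t * (\<Phi> - \<mu> * D) * (t * L * D + t * (Lxy / c) * (L * D - \<Phi> - \<mu> * D) - 2 * D)"
    using assms by (simp add: power2_eq_square field_simps) algebra
  ultimately show ?thesis
    by linarith
qed

lemma gda_scalar_bound:
  fixes D \<Phi> A B Y L Lxy \<mu> t :: real
  defines "c \<equiv> sqrt (\<mu> * (L - \<mu>))"
  assumes "D > 0" "Lxy \<ge> 0" "\<mu> > 0" "t > 0"
    and step: "t * (L * \<mu> + 2 * Lxy * c + Lxy\<^sup>2) < 2 * \<mu>"
    and "0 \<le> A" "A \<le> \<Phi> * (L * D - \<Phi>)" "0 \<le> B" "B \<le> Lxy\<^sup>2 * D\<^sup>2" "Y\<^sup>2 \<le> A * B"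
    and growth: "\<mu> * D \<le> \<Phi>"
  shows "D\<^sup>2 - 2 * t * \<Phi> * D + t\<^sup>2 * (\<Phi>\<^sup>2 + A + 2 * Y + B)
    \<le> (t * (2 * t * Lxy * c + \<mu> * (L * t - 2) + t * Lxy\<^sup>2) + 1) * D\<^sup>2"
proof -
  have "0 < \<mu> * D"
    using assms by simp
  with growth have "\<Phi> > 0"
    by linarith
  moreover have "0 \<le> \<Phi> * (L * D - \<Phi>)"
    using assms by linarith
  ultimately have "\<Phi> \<le> L * D"
    by (simp add: zero_le_mult_iff)
  then have "\<mu> \<le> L"
    using growth \<open>D > 0\<close> mult_right_le_imp_le[of \<mu> D L] by linarith
  have rhs: "(t * (2 * t * Lxy * c + \<mu> * (L * t - 2) + t * Lxy\<^sup>2) + 1) * D\<^sup>2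
      = D\<^sup>2 - 2 * t * \<mu> * D\<^sup>2 + t\<^sup>2 * (L * \<mu> + 2 * Lxy * c + Lxy\<^sup>2) * D\<^sup>2"
    by (simp add: power2_eq_square algebra_simps)
  show ?thesis
  proof (cases "\<mu> < L")
    case False
    then have "\<mu> = L" "c = 0" "\<Phi> = L * D"
      using \<open>\<mu> \<le> L\<close> growth \<open>\<Phi> \<le> L * D\<close> by (simp_all add: c_def)
    then have "A = 0"
      using assms by simp
    then have "Y = 0"
      using assms by simp
    have "t\<^sup>2 * (\<Phi>\<^sup>2 + A + 2 * Y + B) \<le> t\<^sup>2 * (L\<^sup>2 * D\<^sup>2 + Lxy\<^sup>2 * D\<^sup>2)"
      using assms \<open>A = 0\<close> \<open>Y = 0\<close> \<open>\<Phi> = L * D\<close>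
      by (intro mult_left_mono) (auto simp: power_mult_distrib)
    then show ?thesis
      unfolding rhs using \<open>\<mu> = L\<close> \<open>c = 0\<close> \<open>\<Phi> = L * D\<close>
      by (simp add: power2_eq_square algebra_simps)
  next
    case True
    then have "c > 0" "c\<^sup>2 = \<mu> * (L - \<mu>)"
      using \<open>\<mu> > 0\<close> by (simp_all add: c_def)
    have "A + 2 * Y + B \<le> (1 + Lxy / c) * (\<Phi> * (L * D - \<Phi>)) + (c * Lxy + Lxy\<^sup>2) * D\<^sup>2"
      using assms \<open>c > 0\<close> by (intro cross_term_le_tangent_bound) auto
    then have "D\<^sup>2 - 2 * t * \<Phi> * D + t\<^sup>2 * (\<Phi>\<^sup>2 + A + 2 * Y + B)
        \<le> D\<^sup>2 - 2 * t * \<Phi> * D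
          + t\<^sup>2 * (\<Phi>\<^sup>2 + (1 + Lxy / c) * (\<Phi> * (L * D - \<Phi>)) + (c * Lxy + Lxy\<^sup>2) * D\<^sup>2)"
      by (simp add: mult_left_mono)
    also have "\<dots> \<le> D\<^sup>2 - 2 * t * \<mu> * D\<^sup>2 + t\<^sup>2 * (L * \<mu> + 2 * Lxy * c + Lxy\<^sup>2) * D\<^sup>2"
    proof (rule gda_majorant_le_at_growth_rate)
      show "t * (L + Lxy / c * (L - 2 * \<mu>)) \<le> 2"
        using assms True unfolding c_def by (intro step_size_slope_bound) auto
    qed (use assms \<open>c > 0\<close> \<open>c\<^sup>2 = \<mu> * (L - \<mu>)\<close> in auto)
    finally show ?thesis
      unfolding rhs .
  qed
qed

lemma split_direction_step_bound:
  fixes w s d :: "'v::real_inner" and q L Lxy \<mu> t :: real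
  defines "c \<equiv> sqrt (\<mu> * (L - \<mu>))"
  assumes "L > 0" "Lxy \<ge> 0" "\<mu> > 0" "t > 0"
    and step: "t * (L * \<mu> + 2 * Lxy * c + Lxy\<^sup>2) < 2 * \<mu>"
    and w_bound: "(norm w)\<^sup>2 \<le> L * q"
    and s_bound: "(norm s)\<^sup>2 \<le> Lxy\<^sup>2 * (norm d)\<^sup>2"
    and interpolation: "\<bar>s \<bullet> d\<bar> \<le> w \<bullet> d - q"
    and growth: "\<mu> * (norm d)\<^sup>2 \<le> (w + s) \<bullet> d"
  shows "(norm (d - t *\<^sub>R (w + s)))\<^sup>2
    \<le> (t * (2 * t * Lxy * c + \<mu> * (L * t - 2) + t * Lxy\<^sup>2) + 1) * (norm d)\<^sup>2"
proof (cases "d = 0")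
  case True
  then have "L * q \<le> 0"
    using interpolation \<open>L > 0\<close> by (simp add: mult_le_0_iff)
  then have "(norm w)\<^sup>2 \<le> 0"
    using w_bound by linarith
  then have "w = 0" "s = 0"
    using True s_bound by simp_all
  then show ?thesis
    using True by simp
next
  case False
  define D P \<sigma> where "D = d \<bullet> d" and "P = w \<bullet> d" and "\<sigma> = s \<bullet> d"
  have "D > 0"
    using False unfolding D_def by simp
  have "D * (norm (d - t *\<^sub>R (w + s)))\<^sup>2
      = D\<^sup>2 - 2 * t * (P + \<sigma>) * D + t\<^sup>2 * ((P + \<sigma>)\<^sup>2 + (D * (w \<bullet> w) - P\<^sup>2)
        + 2 * (D * (w \<bullet> s) - P * \<sigma>) + (D * (s \<bullet> s) - \<sigma>\<^sup>2))"
    unfolding D_def P_def \<sigma>_def power2_norm_eq_inner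
    by (simp add: inner_diff_left inner_diff_right inner_add_left inner_add_right inner_commute
        power2_eq_square algebra_simps)
  also have "\<dots> \<le> (t * (2 * t * Lxy * c + \<mu> * (L * t - 2) + t * Lxy\<^sup>2) + 1) * D\<^sup>2"
    unfolding c_def
  proof (rule gda_scalar_bound)
    show "0 \<le> D * (w \<bullet> w) - P\<^sup>2" "0 \<le> D * (s \<bullet> s) - \<sigma>\<^sup>2"
      using Cauchy_Schwarz_ineq[of w d] Cauchy_Schwarz_ineq[of s d]
      unfolding D_def P_def \<sigma>_def by (simp_all add: mult.commute)
    show "D * (w \<bullet> w) - P\<^sup>2 \<le> (P + \<sigma>) * (L * D - (P + \<sigma>))"
      using \<open>D > 0\<close> \<open>L > 0\<close> w_bound interpolation Cauchy_Schwarz_ineq[of w d]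
      unfolding D_def P_def \<sigma>_def power2_norm_eq_inner
      by (intro square_defect_le_interpolation_bound) (auto simp: mult.commute)
    have "D * (s \<bullet> s) \<le> Lxy\<^sup>2 * D\<^sup>2"
      using s_bound \<open>D > 0\<close> unfolding D_def power2_norm_eq_inner
      by (simp add: power2_eq_square mult.commute mult.left_commute)
    then show "D * (s \<bullet> s) - \<sigma>\<^sup>2 \<le> Lxy\<^sup>2 * D\<^sup>2"
      using zero_le_power2[of \<sigma>] by linarith
    show "(D * (w \<bullet> s) - P * \<sigma>)\<^sup>2 \<le> (D * (w \<bullet> w) - P\<^sup>2) * (D * (s \<bullet> s) - \<sigma>\<^sup>2)"
      using Cauchy_Schwarz_ineq_orthogonal_to[of d w s] \<open>D > 0\<close>
      unfolding D_def P_def \<sigma>_def by simp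
    show "\<mu> * D \<le> P + \<sigma>"
      using growth unfolding D_def P_def \<sigma>_def power2_norm_eq_inner by (simp add: inner_add_left)
  qed (use assms \<open>D > 0\<close> in auto)
  finally show ?thesis
    using \<open>D > 0\<close> unfolding D_def power2_norm_eq_inner by (simp add: power2_eq_square)
qed

text \<open>In the application \<open>(hx, hy) = z - z\<^sup>*\<close>, and \<open>g\<close>, \<open>u\<close>, \<open>v\<close> are the partial gradients at
  the corners \<open>(x, y)\<close>, \<open>(x, y\<^sup>*)\<close>, \<open>(x\<^sup>*, y)\<close> of the rectangle spanned by \<open>z\<close> and \<open>z\<^sup>*\<close>.\<close>

lemma rectangle_step_bound:
  fixes hx gx ux vx :: "'a::real_inner" and hy gy uy vy :: "'b::real_inner"
    and L Lxy \<mu> t :: real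
  defines "c \<equiv> sqrt (\<mu> * (L - \<mu>))"
    and "q \<equiv> ((norm ux)\<^sup>2 + (norm (gx - vx))\<^sup>2 + (norm vy)\<^sup>2 + (norm (gy - uy))\<^sup>2) / (2 * L)"
  assumes "L > 0" "Lxy \<ge> 0" "\<mu> > 0" "t > 0"
    and step: "t * (L * \<mu> + 2 * Lxy * c + Lxy\<^sup>2) < 2 * \<mu>"
    and diagonal: "q \<le> gx \<bullet> hx - gy \<bullet> hy"
    and antidiagonal: "q \<le> (ux - vx) \<bullet> hx + (uy - vy) \<bullet> hy"
    and coupling: "norm vx \<le> Lxy * norm hy" "norm (gx - ux) \<le> Lxy * norm hy"
      "norm uy \<le> Lxy * norm hx" "norm (gy - vy) \<le> Lxy * norm hx"
    and growth: "\<mu> * ((norm hx)\<^sup>2 + (norm hy)\<^sup>2) \<le> gx \<bullet> hx - gy \<bullet> hy"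
  shows "(norm (hx - t *\<^sub>R gx))\<^sup>2 + (norm (hy + t *\<^sub>R gy))\<^sup>2
    \<le> (t * (2 * t * Lxy * c + \<mu> * (L * t - 2) + t * Lxy\<^sup>2) + 1) * ((norm hx)\<^sup>2 + (norm hy)\<^sup>2)"
proof -
  define d where "d = (hx, hy)"
  define w1 w2 where "w1 = (gx - vx, uy - gy)" and "w2 = (ux, - vy)"
  define w where "w = (1/2) *\<^sub>R (w1 + w2)"
  define s where "s = (gx, - gy) - w"
  have norm_Pair_sq: "(norm (a, b))\<^sup>2 = (norm a)\<^sup>2 + (norm b)\<^sup>2" for a :: 'a and b :: 'b
    by (simp add: norm_Pair)
  have "(norm w)\<^sup>2 \<le> ((norm w1)\<^sup>2 + (norm w2)\<^sup>2) / 2"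
    using inner_ge_zero[of "w1 - w2"] unfolding w_def power2_norm_eq_inner
    by (simp add: inner_add_left inner_add_right inner_diff_left inner_diff_right inner_commute
        algebra_simps)
  also have "\<dots> = L * q"
    using \<open>L > 0\<close> unfolding q_def w1_def w2_def norm_Pair_sq
    by (simp add: norm_minus_commute field_simps)
  finally have w_bound: "(norm w)\<^sup>2 \<le> L * q" .
  have s_eq: "s = ((1/2) *\<^sub>R (vx + (gx - ux)), - ((1/2) *\<^sub>R (uy + (gy - vy))))"
    unfolding s_def w_def w1_def w2_def
    by (simp add: algebra_simps) (simp flip: scaleR_add_left)
  have "norm ((1/2) *\<^sub>R (vx + (gx - ux))) \<le> Lxy * norm hy"
    using norm_triangle_ineq[of vx "gx - ux"] coupling by simp
  moreover have "norm ((1/2) *\<^sub>R (uy + (gy - vy))) \<le> Lxy * norm hx"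
    using norm_triangle_ineq[of uy "gy - vy"] coupling by simp
  ultimately have "(norm s)\<^sup>2 \<le> (Lxy * norm hy)\<^sup>2 + (Lxy * norm hx)\<^sup>2"
    unfolding s_eq norm_Pair_sq norm_minus_cancel by (intro add_mono power_mono) auto
  then have s_bound: "(norm s)\<^sup>2 \<le> Lxy\<^sup>2 * (norm d)\<^sup>2"
    unfolding d_def norm_Pair_sq by (simp add: power_mult_distrib algebra_simps)
  have "(w + s) \<bullet> d = gx \<bullet> hx - gy \<bullet> hy"
    unfolding s_def d_def by simp
  moreover have "(w - s) \<bullet> d = (ux - vx) \<bullet> hx + (uy - vy) \<bullet> hy"
    unfolding s_def w_def w1_def w2_def d_def
    by (simp add: inner_diff_left inner_add_left algebra_simps)
  ultimately have "\<bar>s \<bullet> d\<bar> \<le> w \<bullet> d - q" and "\<mu> * (norm d)\<^sup>2 \<le> (w + s) \<bullet> d"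
    using diagonal antidiagonal growth unfolding d_def norm_Pair_sq
    by (auto simp: inner_add_left inner_diff_left)
  then have "(norm (d - t *\<^sub>R (w + s)))\<^sup>2
      \<le> (t * (2 * t * Lxy * c + \<mu> * (L * t - 2) + t * Lxy\<^sup>2) + 1) * (norm d)\<^sup>2"
    using assms w_bound s_bound unfolding c_def by (intro split_direction_step_bound) auto
  moreover have "d - t *\<^sub>R (w + s) = (hx - t *\<^sub>R gx, hy + t *\<^sub>R gy)"
    unfolding s_def d_def by simp
  ultimately show ?thesis
    unfolding d_def by (simp add: norm_Pair_sq)
qed

lemma smooth_convex_concave_above_quadratic_x:
  assumes F: "smooth_convex_concave Lx Ly Lxy F Gx Gy" and "Lx \<le> L" "L > 0"
  shows "F a b + Gx a b \<bullet> (a' - a) + (norm (Gx a' b - Gx a b))\<^sup>2 / (2 * L) \<le> F a' b"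
proof (rule convex_Lipschitz_gradient_imp_above_quadratic[where f = "\<lambda>u. F u b"])
  show "((\<lambda>u. F u b) has_derivative (\<lambda>h. Gx u b \<bullet> h)) (at u)" for u
    using F unfolding smooth_convex_concave_def partial_gradients_def by blast
  show "convex_on UNIV (\<lambda>u. F u b)"
    using F unfolding smooth_convex_concave_def by blast
  show "norm (Gx u b - Gx v b) \<le> L * norm (u - v)" for u v
  proof -
    have "norm (Gx u b - Gx v b) \<le> Lx * norm (u - v)"
      using F unfolding smooth_convex_concave_def by blast
    also have "\<dots> \<le> L * norm (u - v)"
      using \<open>Lx \<le> L\<close> by (intro mult_right_mono) auto
    finally show ?thesis .
  qed
qed fact

lemma smooth_convex_concave_below_quadratic_y:
  assumes F: "smooth_convex_concave Lx Ly Lxy F Gx Gy" and "Ly \<le> L" "L > 0"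
  shows "F a b' \<le> F a b + Gy a b \<bullet> (b' - b) - (norm (Gy a b' - Gy a b))\<^sup>2 / (2 * L)"
proof -
  have "- F a b + (- Gy a b) \<bullet> (b' - b) + (norm (- Gy a b' - - Gy a b))\<^sup>2 / (2 * L) \<le> - F a b'"
  proof (rule convex_Lipschitz_gradient_imp_above_quadratic[where f = "\<lambda>v. - F a v"])
    show "((\<lambda>v. - F a v) has_derivative (\<lambda>h. (- Gy a v) \<bullet> h)) (at v)" for v
      using F unfolding smooth_convex_concave_def partial_gradients_def
      by (auto intro: has_derivative_minus[where f = "\<lambda>v. F a v", simplified])
    show "convex_on UNIV (\<lambda>v. - F a v)"
      using F unfolding smooth_convex_concave_def concave_on_def by blast
    show "norm (- Gy a u - - Gy a v) \<le> L * norm (u - v)" for u v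
    proof -
      have "norm (- Gy a u - - Gy a v) \<le> Ly * norm (u - v)"
        using F unfolding smooth_convex_concave_def by (simp add: norm_minus_commute)
      also have "\<dots> \<le> L * norm (u - v)"
        using \<open>Ly \<le> L\<close> by (intro mult_right_mono) auto
      finally show ?thesis .
    qed
  qed fact
  then show ?thesis
    by (simp add: norm_minus_commute)
qed

lemma partial_gradients_vanish_at_saddle_point:
  assumes grad: "partial_gradients F Gx Gy" and saddle: "(xs, ys) \<in> saddle_points F"
  shows "Gx xs ys = 0" and "Gy xs ys = 0"
proof -
  have "(\<lambda>h. Gx xs ys \<bullet> h) = (\<lambda>h. 0)"
    using grad saddle unfolding partial_gradients_def saddle_points_def
    by (intro has_derivative_local_min[where f = "\<lambda>u. F u ys"]) auto
  from fun_cong[OF this, of "Gx xs ys"] show "Gx xs ys = 0"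
    by simp
  have "(\<lambda>h. Gy xs ys \<bullet> h) = (\<lambda>h. 0)"
    using grad saddle unfolding partial_gradients_def saddle_points_def
    by (intro has_derivative_local_max[where f = "\<lambda>v. F xs v"]) auto
  from fun_cong[OF this, of "Gy xs ys"] show "Gy xs ys = 0"
    by simp
qed

lemma closed_saddle_points:
  assumes cont: "continuous_on UNIV (\<lambda>(x, y). F x y)"
  shows "closed (saddle_points F)"
proof -
  have "continuous_on UNIV (\<lambda>p. F (fst p) y)" for y
    by (rule continuous_on_compose2[OF cont, of UNIV "\<lambda>p. (fst p, y)", simplified])
      (auto intro!: continuous_intros)
  moreover have "continuous_on UNIV (\<lambda>p. F x (snd p))" for x
    by (rule continuous_on_compose2[OF cont, of UNIV "\<lambda>p. (x, snd p)", simplified])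
      (auto intro!: continuous_intros)
  moreover have "continuous_on UNIV (\<lambda>p. F (fst p) (snd p))"
    using cont by (simp add: case_prod_unfold)
  moreover have "saddle_points F = (\<Inter>y. {p. F (fst p) y \<le> F (fst p) (snd p)})
      \<inter> (\<Inter>x. {p. F (fst p) (snd p) \<le> F x (snd p)})"
    unfolding saddle_points_def by auto
  ultimately show ?thesis
    by (auto intro!: closed_Int closed_INT closed_Collect_le)
qed

lemma saddle_rectangle_interpolation:
  fixes F :: "'a::real_inner \<Rightarrow> 'b::real_inner \<Rightarrow> real" and x xs :: 'a and y ys :: 'b
  assumes convex_x: "\<And>a a' b. F a b + Gx a b \<bullet> (a' - a) + (norm (Gx a' b - Gx a b))\<^sup>2 / (2 * L) \<le> F a' b"
    and concave_y: "\<And>a b b'. F a b' \<le> F a b + Gy a b \<bullet> (b' - b) - (norm (Gy a b' - Gy a b))\<^sup>2 / (2 * L)"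
    and "Gx xs ys = 0" "Gy xs ys = 0"
  defines "q \<equiv> ((norm (Gx x ys))\<^sup>2 + (norm (Gx x y - Gx xs y))\<^sup>2
      + (norm (Gy xs y))\<^sup>2 + (norm (Gy x y - Gy x ys))\<^sup>2) / (2 * L)"
  shows "q \<le> Gx x y \<bullet> (x - xs) - Gy x y \<bullet> (y - ys)"
    and "q \<le> (Gx x ys - Gx xs y) \<bullet> (x - xs) + (Gy x ys - Gy xs y) \<bullet> (y - ys)"
proof -
  have q_split: "q = (norm (Gx x ys))\<^sup>2 / (2 * L) + (norm (Gx x y - Gx xs y))\<^sup>2 / (2 * L)
      + (norm (Gy xs y))\<^sup>2 / (2 * L) + (norm (Gy x y - Gy x ys))\<^sup>2 / (2 * L)"
    unfolding q_def by (simp add: add_divide_distrib)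
  show "q \<le> Gx x y \<bullet> (x - xs) - Gy x y \<bullet> (y - ys)"
    using convex_x[where a=xs and a'=x and b=ys] convex_x[where a=x and a'=xs and b=y]
      concave_y[where a=xs and b=ys and b'=y] concave_y[where a=x and b=y and b'=ys] assms(3,4)
    unfolding q_split by (simp add: inner_diff_right norm_minus_commute)
  show "q \<le> (Gx x ys - Gx xs y) \<bullet> (x - xs) + (Gy x ys - Gy xs y) \<bullet> (y - ys)"
    using convex_x[where a=x and a'=xs and b=ys] convex_x[where a=xs and a'=x and b=y]
      concave_y[where a=xs and b=y and b'=ys] concave_y[where a=x and b=ys and b'=y] assms(3,4)
    unfolding q_split by (simp add: inner_diff_left inner_diff_right norm_minus_commute)
qed

lemma gda_step_contraction:
  fixes F :: "'a::euclidean_space \<Rightarrow> 'b::euclidean_space \<Rightarrow> real" and L \<mu> :: real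
  defines "c \<equiv> sqrt (\<mu> * (L - \<mu>))"
  assumes F: "smooth_convex_concave Lx Ly Lxy F Gx Gy"
    and "Lx \<le> L" "Ly \<le> L" and constants: "L > 0" "Lxy \<ge> 0" "\<mu> > 0" "t > 0"
    and step: "t * (L * \<mu> + 2 * Lxy * c + Lxy\<^sup>2) < 2 * \<mu>"
    and saddle: "(xs, ys) \<in> saddle_points F"
    and growth: "\<mu> * (dist (x, y) (xs, ys))\<^sup>2 \<le> Gx x y \<bullet> (x - xs) - Gy x y \<bullet> (y - ys)"
  shows "(dist (x - t *\<^sub>R Gx x y, y + t *\<^sub>R Gy x y) (xs, ys))\<^sup>2
    \<le> (t * (2 * t * Lxy * c + \<mu> * (L * t - 2) + t * Lxy\<^sup>2) + 1) * (dist (x, y) (xs, ys))\<^sup>2"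
proof -
  have dist_sq: "(dist (a, b) (xs, ys))\<^sup>2 = (norm (a - xs))\<^sup>2 + (norm (b - ys))\<^sup>2" for a b
    by (simp add: dist_Pair_Pair dist_norm norm_Pair)
  have "partial_gradients F Gx Gy"
    using F unfolding smooth_convex_concave_def by simp
  note stationary = partial_gradients_vanish_at_saddle_point[OF this saddle]
  note interpolation = saddle_rectangle_interpolation[of F Gx L Gy xs ys x y,
      OF smooth_convex_concave_above_quadratic_x[OF F \<open>Lx \<le> L\<close> \<open>L > 0\<close>]
        smooth_convex_concave_below_quadratic_y[OF F \<open>Ly \<le> L\<close> \<open>L > 0\<close>] stationary]
  have coupling_x: "norm (Gx a b' - Gx a b) \<le> Lxy * norm (b' - b)" for a b b'
    using F unfolding smooth_convex_concave_def by blast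
  have coupling_y: "norm (Gy a' b - Gy a b) \<le> Lxy * norm (a' - a)" for a a' b
    using F unfolding smooth_convex_concave_def by blast
  have shift: "x - t *\<^sub>R Gx x y - xs = (x - xs) - t *\<^sub>R Gx x y"
    "y + t *\<^sub>R Gy x y - ys = (y - ys) + t *\<^sub>R Gy x y"
    by (simp_all add: algebra_simps)
  show ?thesis
    unfolding dist_sq shift c_def
  proof (rule rectangle_step_bound[where ux = "Gx x ys" and vx = "Gx xs y" and uy = "Gy x ys"
        and vy = "Gy xs y"])
    show "norm (Gx xs y) \<le> Lxy * norm (y - ys)" "norm (Gx x y - Gx x ys) \<le> Lxy * norm (y - ys)"
      using coupling_x[where a=xs and b=ys and b'=y] coupling_x[where a=x and b=ys and b'=y] stationary
      by simp_all
    show "norm (Gy x ys) \<le> Lxy * norm (x - xs)" "norm (Gy x y - Gy xs y) \<le> Lxy * norm (x - xs)"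
      using coupling_y[where a=xs and a'=x and b=ys] coupling_y[where a=xs and a'=x and b=y] stationary
      by simp_all
    show "\<mu> * ((norm (x - xs))\<^sup>2 + (norm (y - ys))\<^sup>2) \<le> Gx x y \<bullet> (x - xs) - Gy x y \<bullet> (y - ys)"
      using growth unfolding dist_sq .
  qed (use constants step[unfolded c_def] interpolation in simp_all)
qed

theorem theorem3p3:
  fixes F :: "'a::euclidean_space \<Rightarrow> 'b::euclidean_space \<Rightarrow> real"
    and Gx :: "'a \<Rightarrow> 'b \<Rightarrow> 'a" and Gy :: "'a \<Rightarrow> 'b \<Rightarrow> 'b"
    and Lx Ly Lxy \<mu> t :: real and x1 :: 'a and y1 :: 'b
  assumes "Lx > 0" "Ly > 0" "Lxy \<ge> 0"
    and "smooth_convex_concave Lx Ly Lxy F Gx Gy"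
    and "saddle_points F \<noteq> {}"
    and "quadratic_gradient_growth F Gx Gy \<mu>"
    and "t > 0"
    and "t < 2 * \<mu> / (max Lx Ly * \<mu> + 2 * Lxy * sqrt (\<mu> * (max Lx Ly - \<mu>)) + Lxy\<^sup>2)"
  shows "(infdist (x1 - t *\<^sub>R Gx x1 y1, y1 + t *\<^sub>R Gy x1 y1) (saddle_points F))\<^sup>2
         \<le> (t * (2 * t * Lxy * sqrt (\<mu> * (max Lx Ly - \<mu>)) + \<mu> * (max Lx Ly * t - 2) + t * Lxy\<^sup>2) + 1)
           * (infdist (x1, y1) (saddle_points F))\<^sup>2"
proof -
  define S where "S = saddle_points F"
  define p where "p = closest_point S (x1, y1)"
  have "\<mu> > 0"
    using assms(6) unfolding quadratic_gradient_growth_def by simp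
  have "closed S"
    using assms(4) unfolding S_def smooth_convex_concave_def
    by (intro closed_saddle_points differentiable_imp_continuous_on
        differentiable_at_imp_differentiable_on) auto
  then have "p \<in> S" and dist_p: "infdist (x1, y1) S = dist (x1, y1) p"
    using assms(5) unfolding S_def p_def
    by (simp_all add: closest_point_in_set infdist_eq_setdist setdist_closest_point)
  have growth: "\<mu> * (dist (x1, y1) p)\<^sup>2 \<le> Gx x1 y1 \<bullet> (x1 - fst p) - Gy x1 y1 \<bullet> (y1 - snd p)"
    using assms(6) dist_p unfolding quadratic_gradient_growth_def S_def p_def Let_def by metis
  have step: "t * (max Lx Ly * \<mu> + 2 * Lxy * sqrt (\<mu> * (max Lx Ly - \<mu>)) + Lxy\<^sup>2) < 2 * \<mu>"
    using assms(7,8) \<open>\<mu> > 0\<close> by (smt (verit) divide_nonneg_nonpos pos_less_divide_eq mult.commute)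
  have "(dist (x1 - t *\<^sub>R Gx x1 y1, y1 + t *\<^sub>R Gy x1 y1) p)\<^sup>2
      \<le> (t * (2 * t * Lxy * sqrt (\<mu> * (max Lx Ly - \<mu>)) + \<mu> * (max Lx Ly * t - 2) + t * Lxy\<^sup>2) + 1)
        * (dist (x1, y1) p)\<^sup>2"
    using gda_step_contraction[OF assms(4) _ _ _ assms(3) \<open>\<mu> > 0\<close> assms(7) step, of "fst p" "snd p"]
      \<open>p \<in> S\<close> growth assms(1) unfolding S_def by (simp add: mult.commute)
  moreover have "infdist (x1 - t *\<^sub>R Gx x1 y1, y1 + t *\<^sub>R Gy x1 y1) S
      \<le> dist (x1 - t *\<^sub>R Gx x1 y1, y1 + t *\<^sub>R Gy x1 y1) p"
    using \<open>p \<in> S\<close> by (rule infdist_le)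
  ultimately show ?thesis
    unfolding dist_p S_def[symmetric] by (smt (verit) infdist_nonneg power_mono)
qed

end
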